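(* There exist symmetric matrices $C,A_1,\dots,A_m\in\mathbb{S}^n$, $b\in\mathbb{R}^m$ and a nonzero $S\in\mathbb{S}^n_+$ with $C\cdot S=0$ and $A_i\cdot S=0$ for all $i$ such that: the pair (P-SDP): maximize $b^Ty$ s.t. $C-\sum_iy_iA_i\in\mathbb{S}^n_+$, and (D-SDP): minimize $C\cdot X$ s.t. $A_i\cdot X=b_i$, $X\in\mathbb{S}^n_+$, both attain their optimal values and these values are equal; the reduced pair (R/P): maximize $b^Ty$ s.t. $C-\sum_iy_iA_i\in\mathcal{F}$, and (R/D): minimize $C\cdot X$ s.t. $A_i\cdot X=b_i$, $X\in\mathcal{F}^*$, where $\mathcal{F}=\mathbb{S}^n_+\cap S^{\perp}$, both attain their optimal values and these values are equal; and yet there is an optimal solution $X$ of (R/D) for which no $\alpha\in\mathbb{R}$ satisfies $X+\alpha S\in\mathbb{S}^n_+$ (so the dual recovery procedure fails on $X$).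
   Context: $\mathbb{S}^n$ denotes real symmetric $n\times n$ matrices with trace inner product $A\cdot B=\operatorname{trace}(AB)$, $\mathbb{S}^n_+$ the positive semidefinite cone, $S^{\perp}=\{X:S\cdot X=0\}$, and $\mathcal{F}^*=\{Y\in\mathbb{S}^n: Y\cdot X\ge0\ \forall X\in\mathcal{F}\}$. The dual recovery procedure (for one reducing certificate $S$) takes an optimal solution $X$ of (R/D) and seeks $\alpha$ with $X+\alpha S\in\mathbb{S}^n_+$, failing if none exists. *)

theory Defs
  imports Complex_Main
begin

text \<open>n x n real matrices are represented as functions nat => nat => real,
  only entries with indices below n being relevant. Vectors in R^m as nat => real.\<close>

type_synonym rmat = "nat \<Rightarrow> nat \<Rightarrow> real"

definition symm :: "nat \<Rightarrow> rmat \<Rightarrow> bool" where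
  "symm n A \<longleftrightarrow> (\<forall>i<n. \<forall>j<n. A i j = A j i)"

definition tr_inner :: "nat \<Rightarrow> rmat \<Rightarrow> rmat \<Rightarrow> real" where
  "tr_inner n A B = (\<Sum>i<n. \<Sum>j<n. A i j * B j i)"

definition psd :: "nat \<Rightarrow> rmat \<Rightarrow> bool" where
  "psd n A \<longleftrightarrow> symm n A \<and> (\<forall>x::nat \<Rightarrow> real. (\<Sum>i<n. \<Sum>j<n. x i * A i j * x j) \<ge> 0)"

definition face_F :: "nat \<Rightarrow> rmat \<Rightarrow> rmat \<Rightarrow> bool" where
  "face_F n S X \<longleftrightarrow> psd n X \<and> tr_inner n S X = 0"

definition face_F_dual :: "nat \<Rightarrow> rmat \<Rightarrow> rmat \<Rightarrow> bool" where
  "face_F_dual n S Y \<longleftrightarrow> symm n Y \<and> (\<forall>X. face_F n S X \<longrightarrow> tr_inner n Y X \<ge> 0)"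

definition slack :: "nat \<Rightarrow> rmat \<Rightarrow> (nat \<Rightarrow> rmat) \<Rightarrow> (nat \<Rightarrow> real) \<Rightarrow> rmat" where
  "slack m C A y = (\<lambda>i j. C i j - (\<Sum>k<m. y k * A k i j))"

definition bty :: "nat \<Rightarrow> (nat \<Rightarrow> real) \<Rightarrow> (nat \<Rightarrow> real) \<Rightarrow> real" where
  "bty m b y = (\<Sum>k<m. b k * y k)"

text \<open>Primal feasibility with respect to a cone K (given as a predicate on matrices).\<close>
definition primal_feas :: "nat \<Rightarrow> nat \<Rightarrow> rmat \<Rightarrow> (nat \<Rightarrow> rmat) \<Rightarrow> (rmat \<Rightarrow> bool) \<Rightarrow> (nat \<Rightarrow> real) \<Rightarrow> bool" where
  "primal_feas n m C A K y \<longleftrightarrow> K (slack m C A y)"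

definition dual_feas :: "nat \<Rightarrow> nat \<Rightarrow> (nat \<Rightarrow> rmat) \<Rightarrow> (nat \<Rightarrow> real) \<Rightarrow> (rmat \<Rightarrow> bool) \<Rightarrow> rmat \<Rightarrow> bool" where
  "dual_feas n m A b K X \<longleftrightarrow> K X \<and> (\<forall>k<m. tr_inner n (A k) X = b k)"

definition primal_opt where
  "primal_opt n m C A b K y \<longleftrightarrow> primal_feas n m C A K y \<and>
     (\<forall>y'. primal_feas n m C A K y' \<longrightarrow> bty m b y' \<le> bty m b y)"

definition dual_opt where
  "dual_opt n m C A b K X \<longleftrightarrow> dual_feas n m A b K X \<and>
     (\<forall>X'. dual_feas n m A b K X' \<longrightarrow> tr_inner n C X \<le> tr_inner n C X')"

definition attained_no_gap where
  "attained_no_gap n m C A b KP KD \<longleftrightarrow>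
     (\<exists>y X. primal_opt n m C A b KP y \<and> dual_opt n m C A b KD X \<and>
            bty m b y = tr_inner n C X)"

end

theory Submission
  imports Defs
begin

text \<open>Take n = 2, S = E_11 and the problems with no constraints and zero objective, so that
  every feasible point is optimal. A PSD matrix with a zero diagonal entry has a zero row,
  hence F consists of the matrices diag(0, z) with z \<ge> 0, and F* contains the exchange
  matrix [[0,1],[1,0]]. But [[\<alpha>,1],[1,0]] has a zero diagonal entry and a nonzero entry in
  that row, so it is PSD for no \<alpha>: the cone S^2_+ + span S is not closed.\<close>

lemma psd_zero: "psd n (\<lambda>i j. 0)"
  by (simp add: psd_def symm_def)

lemma psd_quadratic_form_nonneg:
  "psd n A \<Longrightarrow> (\<Sum>i<n. \<Sum>j<n. x i * A i j * x j) \<ge> 0"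
  by (simp add: psd_def)

lemma sum_mult_delta_right:
  fixes n p :: nat
  assumes "p < n"
  shows "(\<Sum>l<n. f l * (if l = p then c else 0)) = f p * (c :: real)"
proof -
  have "(\<Sum>l<n. f l * (if l = p then c else 0)) = (\<Sum>l<n. if l = p then f l * c else 0)"
    by (rule sum.cong) simp_all
  also have "\<dots> = f p * c"
    using assms by simp
  finally show ?thesis .
qed

lemma sum_mult_delta_left:
  fixes n p :: nat
  shows "p < n \<Longrightarrow> (\<Sum>l<n. (if l = p then c else 0) * f l) = c * (f p :: real)"
  using sum_mult_delta_right[of p n f c] by (simp add: mult.commute)

lemma quadratic_form_delta:
  fixes A :: rmat assumes "i < n" "p < n"
  shows "(\<Sum>k<n. \<Sum>l<n. (if k = i then a else 0) * A k l * (if l = p then c else 0)) = a * A i p * c"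
proof -
  have "(\<Sum>l<n. (if k = i then a else 0) * A k l * (if l = p then c else 0))
      = (if k = i then a else 0) * (A k p * c)" for k
    using sum_mult_delta_right[OF \<open>p < n\<close>, of "\<lambda>l. (if k = i then a else 0) * A k l" c]
    by (simp only: mult.assoc)
  then show ?thesis
    using sum_mult_delta_left[OF \<open>i < n\<close>] by (simp add: mult.assoc)
qed

lemma psd_zero_diagonal_row:
  assumes A: "psd n A" and "i < n" "j < n" and diag: "A i i = 0"
  shows "A i j = 0"
proof (rule ccontr)
  assume nz: "A i j \<noteq> 0"
  have sym: "A j i = A i j" using A \<open>i < n\<close> \<open>j < n\<close> by (simp add: psd_def symm_def)
  \<comment> \<open>the quadratic form at t e_i + e_j is 2 t A_ij + A_jj, which is -1 for this t\<close>
  define t where "t = - (A j j + 1) / (2 * A i j)"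
  define x where "x k = (if k = i then t else 0) + (if k = j then 1 else 0)" for k
  have "(\<Sum>k<n. \<Sum>l<n. x k * A k l * x l) = t * t * A i i + t * A i j + t * A j i + A j j"
    using \<open>i < n\<close> \<open>j < n\<close>
    by (simp add: x_def distrib_left distrib_right sum.distrib quadratic_form_delta)
  also have "\<dots> = -1"
    using diag sym nz by (simp add: t_def field_simps)
  finally show False
    using psd_quadratic_form_nonneg[OF A, of x] by simp
qed

lemma face_F_dual_zero: "face_F_dual n S (\<lambda>i j. 0)"
  by (simp add: face_F_dual_def symm_def tr_inner_def)

lemma face_F_zero: "face_F n S (\<lambda>i j. 0)"
  by (simp add: face_F_def psd_zero tr_inner_def)

lemma attained_no_gap_zero_program:
  assumes "KP (\<lambda>i j. 0)" and "KD (\<lambda>i j. 0)"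
  shows "attained_no_gap n 0 (\<lambda>i j. 0) A b KP KD"
  unfolding attained_no_gap_def
  using assms
  by (intro exI[of _ "\<lambda>k. 0"] exI[of _ "\<lambda>i j. 0"])
     (simp add: primal_opt_def dual_opt_def primal_feas_def dual_feas_def slack_def
                bty_def tr_inner_def)

lemma dual_opt_zero_program:
  "dual_opt n 0 (\<lambda>i j. 0) A b K X \<longleftrightarrow> K X"
  by (simp add: dual_opt_def dual_feas_def tr_inner_def)

lemma sum_lessThan_2: "(\<Sum>i<(2::nat). f i) = f 0 + f 1"
  by (simp add: numeral_2_eq_2)

definition corner_unit :: rmat where
  "corner_unit = (\<lambda>i j. if i = 0 \<and> j = 0 then 1 else 0)"

definition exchange_matrix :: rmat where
  "exchange_matrix = (\<lambda>i j. if i \<noteq> j then 1 else 0)"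

lemma psd_corner_unit: "psd 2 corner_unit"
  by (simp add: psd_def symm_def corner_unit_def sum_lessThan_2)

lemma face_F_corner_unit_off_diagonal:
  assumes "face_F 2 corner_unit Z"
  shows "Z 0 1 = 0" and "Z 1 0 = 0"
proof -
  have Z: "psd 2 Z" and diag: "Z 0 0 = 0"
    using assms by (simp_all add: face_F_def tr_inner_def corner_unit_def sum_lessThan_2)
  show "Z 0 1 = 0" using psd_zero_diagonal_row[OF Z _ _ diag] by simp
  with Z show "Z 1 0 = 0" by (simp add: psd_def symm_def)
qed

lemma exchange_matrix_in_face_F_dual: "face_F_dual 2 corner_unit exchange_matrix"
  unfolding face_F_dual_def
proof (intro conjI allI impI)
  show "symm 2 exchange_matrix" by (simp add: symm_def exchange_matrix_def)
  fix Z assume "face_F 2 corner_unit Z"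
  then have "Z 0 1 = 0" "Z 1 0 = 0" by (rule face_F_corner_unit_off_diagonal)+
  then show "tr_inner 2 exchange_matrix Z \<ge> 0"
    by (simp add: tr_inner_def exchange_matrix_def sum_lessThan_2)
qed

lemma exchange_matrix_shift_not_psd:
  "\<not> psd 2 (\<lambda>i j. exchange_matrix i j + \<alpha> * corner_unit i j)"
proof
  assume shifted: "psd 2 (\<lambda>i j. exchange_matrix i j + \<alpha> * corner_unit i j)"
  have "exchange_matrix 1 0 + \<alpha> * corner_unit 1 0 = 0"
    using psd_zero_diagonal_row[OF shifted, of 1 0]
    by (simp add: exchange_matrix_def corner_unit_def)
  then show False by (simp add: exchange_matrix_def corner_unit_def)
qed

theorem corollary4:
  shows "\<exists>(n::nat) (m::nat) (C::rmat) (A::nat \<Rightarrow> rmat) (b::nat \<Rightarrow> real) (S::rmat).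
    symm n C \<and> (\<forall>k<m. symm n (A k)) \<and>
    psd n S \<and> (\<exists>i<n. \<exists>j<n. S i j \<noteq> 0) \<and>
    tr_inner n C S = 0 \<and> (\<forall>k<m. tr_inner n (A k) S = 0) \<and>
    attained_no_gap n m C A b (psd n) (psd n) \<and>
    attained_no_gap n m C A b (face_F n S) (face_F_dual n S) \<and>
    (\<exists>X. dual_opt n m C A b (face_F_dual n S) X \<and>
         \<not> (\<exists>\<alpha>::real. psd n (\<lambda>i j. X i j + \<alpha> * S i j)))"
proof (intro exI conjI)
  let ?C = "\<lambda>i j. 0 :: real"
  show "symm 2 ?C" by (simp add: symm_def)
  show "psd 2 corner_unit" by (rule psd_corner_unit)
  show "(0::nat) < 2" "corner_unit 0 0 \<noteq> 0" by (simp_all add: corner_unit_def)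
  show "tr_inner 2 ?C corner_unit = 0" by (simp add: tr_inner_def)
  show "attained_no_gap 2 0 ?C A b (psd 2) (psd 2)" for A b
    by (intro attained_no_gap_zero_program psd_zero)
  show "attained_no_gap 2 0 ?C A b (face_F 2 corner_unit) (face_F_dual 2 corner_unit)" for A b
    by (intro attained_no_gap_zero_program face_F_zero face_F_dual_zero)
  show "dual_opt 2 0 ?C A b (face_F_dual 2 corner_unit) exchange_matrix" for A b
    by (simp add: dual_opt_zero_program exchange_matrix_in_face_F_dual)
  show "\<not> (\<exists>\<alpha>. psd 2 (\<lambda>i j. exchange_matrix i j + \<alpha> * corner_unit i j))"
    using exchange_matrix_shift_not_psd by blast
qed simp_all

end
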